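(* Let $t\ge 3$ and let $\mathcal{H}$ be an $n$-vertex $3$-uniform hypergraph that does not contain $K_{2,t}$ as a trace. Let $A$ be the set of edges of $\mathcal{H}$ containing at least one pair of vertices whose co-degree in $\mathcal{H}$ is $1$, and let $B=\mathcal{H}\setminus A$. For a vertex $x$, let $N_1(x)=\{z: \exists e\in B,\ \{x,z\}\subseteq e\}$. Then for any two distinct vertices $x,y\in V(\mathcal{H})$, $|N_1(x)\cap N_1(y)|\le (t-1)(6t-2)$.
   Context: A hypergraph $\mathcal{H}$ contains a graph $F$ (vertices $v_1,\dots,v_p$, edges $e_1,\dots,e_q$) as a trace if there exist distinct vertices $w_1,\dots,w_p\in V(\mathcal{H})$ and distinct edges $f_1,\dots,f_q\in E(\mathcal{H})$ such that whenever $e_i=v_\alpha v_\beta$, $f_i\cap\{w_1,\dots,w_p\}=\{w_\alpha,w_\beta\}$. The co-degree of a pair $\{x,y\}$ in $\mathcal{H}$ is the number of edges of $\mathcal{H}$ containing $\{x,y\}$. $\mathcal{H}\setminus A$ denotes the hypergraph on $V(\mathcal{H})$ with edge set $E(\mathcal{H})\setminus A$. *)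

theory Defs
  imports Main
begin

definition uniform_hypergraph :: "nat \<Rightarrow> 'a set \<Rightarrow> 'a set set \<Rightarrow> bool" where
  "uniform_hypergraph k V E \<longleftrightarrow> finite V \<and> (\<forall>e\<in>E. e \<subseteq> V \<and> card e = k)"

definition contains_trace :: "'a set \<Rightarrow> 'a set set \<Rightarrow> 'b set \<Rightarrow> 'b set set \<Rightarrow> bool" where
  "contains_trace V E VF EF \<longleftrightarrow>
     (\<exists>phi psi. inj_on phi VF \<and> phi ` VF \<subseteq> V \<and> inj_on psi EF \<and> psi ` EF \<subseteq> E \<and>
        (\<forall>e\<in>EF. psi e \<inter> phi ` VF = phi ` e))"

definition K2t_vertices :: "nat \<Rightarrow> nat set" where
  "K2t_vertices t = {0..<t+2}"

definition K2t_edges :: "nat \<Rightarrow> nat set set" where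
  "K2t_edges t = {{i, j} | i j. i \<in> {0, 1} \<and> j \<in> {2..<t+2}}"

definition codegree :: "'a set set \<Rightarrow> 'a \<Rightarrow> 'a \<Rightarrow> nat" where
  "codegree E x y = card {e \<in> E. {x, y} \<subseteq> e}"

definition edgesA :: "'a set set \<Rightarrow> 'a set set" where
  "edgesA E = {e \<in> E. \<exists>x y. x \<noteq> y \<and> {x, y} \<subseteq> e \<and> codegree E x y = 1}"

definition edgesB :: "'a set set \<Rightarrow> 'a set set" where
  "edgesB E = E - edgesA E"

definition N1 :: "'a set set \<Rightarrow> 'a \<Rightarrow> 'a set" where
  "N1 E x = {z. \<exists>e\<in>edgesB E. {x, z} \<subseteq> e}"

end

theory Submission imports Defs begin

(* If z is a common B-neighbour of x and y (z distinct from x, y), then the pair xz has co-degree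
   at least 2, and since only one edge can contain x, z and y, some edge {x, z, a z} avoids y;
   likewise some edge {y, z, b z} avoids x.  For t such vertices z, none of which equals a third
   vertex a z' or b z' of another, these 2t edges form a trace of K_{2,t} with centres x and y.
   The conflict digraph z -> {a z, b z} has out-degree at most 2, so a greedy choice finds t
   pairwise non-conflicting vertices among any 5t.  Hence there are at most 5t + 1 common
   neighbours, which is below (t - 1)(6t - 2) for t >= 3. *)

lemma exists_low_total_degree:
  fixes g :: "'a \<Rightarrow> 'a set"
  assumes fin: "finite S" and ne: "S \<noteq> {}" and out_deg: "\<forall>z\<in>S. card (g z \<inter> S) \<le> d"
  shows "\<exists>z\<in>S. card {w\<in>S. z \<in> g w} + card (g z \<inter> S) \<le> 2 * d"
proof (rule ccontr)
  assume "\<not> ?thesis"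
  hence large: "\<forall>z\<in>S. 2 * d < card {w\<in>S. z \<in> g w} + card (g z \<inter> S)" by auto
  have in_deg: "card {w\<in>S. z \<in> g w} = (\<Sum>w\<in>S. if z \<in> g w then 1 else 0)" for z
    using fin by (simp add: sum.inter_filter[symmetric])
  have "g w \<inter> S = {z\<in>S. z \<in> g w}" for w by blast
  hence out_deg_sum: "card (g w \<inter> S) = (\<Sum>z\<in>S. if z \<in> g w then 1 else 0)" for w
    using fin by (simp add: sum.inter_filter[symmetric])
  have handshake: "(\<Sum>z\<in>S. card {w\<in>S. z \<in> g w}) = (\<Sum>w\<in>S. card (g w \<inter> S))"
    unfolding in_deg out_deg_sum by (rule sum.swap)
  have "(\<Sum>w\<in>S. card (g w \<inter> S)) \<le> card S * d"
    using sum_bounded_above[of S "\<lambda>w. card (g w \<inter> S)" d] out_deg by auto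
  moreover have "card S * (2 * d) < (\<Sum>z\<in>S. card {w\<in>S. z \<in> g w} + card (g z \<inter> S))"
    using sum_strict_mono[of S "\<lambda>_. 2 * d"] fin ne large by auto
  ultimately show False unfolding sum.distrib handshake by linarith
qed

lemma exists_independent_subset:
  fixes g :: "'a \<Rightarrow> 'a set"
  assumes "finite S" and "\<forall>z\<in>S. card (g z \<inter> S) \<le> d \<and> z \<notin> g z"
    and "(2 * d + 1) * k \<le> card S"
  shows "\<exists>Z\<subseteq>S. card Z = k \<and> (\<forall>z\<in>Z. g z \<inter> Z = {})"
  using assms
proof (induction k arbitrary: S)
  case 0
  then show ?case by auto
next
  case (Suc k)
  then have "S \<noteq> {}" by auto
  then obtain z where "z \<in> S" and low: "card {w\<in>S. z \<in> g w} + card (g z \<inter> S) \<le> 2 * d"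
    using exists_low_total_degree[OF Suc.prems(1)] Suc.prems(2) by blast
  define N where "N = insert z ({w\<in>S. z \<in> g w} \<union> (g z \<inter> S))"
  have "N \<subseteq> S" unfolding N_def using \<open>z \<in> S\<close> by auto
  have "card N \<le> 2 * d + 1"
  proof -
    have "card N \<le> Suc (card ({w\<in>S. z \<in> g w} \<union> (g z \<inter> S)))"
      unfolding N_def by (rule card_insert_le_m1) auto
    also have "\<dots> \<le> Suc (card {w\<in>S. z \<in> g w} + card (g z \<inter> S))"
      using card_Un_le by auto
    finally show ?thesis using low by linarith
  qed
  with Suc.prems(3) have "(2 * d + 1) * k \<le> card (S - N)"
    using card_Diff_subset[OF finite_subset[OF \<open>N \<subseteq> S\<close> Suc.prems(1)] \<open>N \<subseteq> S\<close>] by simp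
  moreover have "\<forall>w\<in>S - N. card (g w \<inter> (S - N)) \<le> d \<and> w \<notin> g w"
  proof
    fix w assume "w \<in> S - N"
    have "card (g w \<inter> (S - N)) \<le> card (g w \<inter> S)"
      using Suc.prems(1) by (intro card_mono) auto
    then show "card (g w \<inter> (S - N)) \<le> d \<and> w \<notin> g w"
      using Suc.prems(2) \<open>w \<in> S - N\<close> by fastforce
  qed
  ultimately obtain Z where Z: "Z \<subseteq> S - N" "card Z = k" "\<forall>w\<in>Z. g w \<inter> Z = {}"
    using Suc.IH[of "S - N"] Suc.prems(1) by auto
  have "z \<notin> Z" using Z(1) unfolding N_def by blast
  have "g z \<inter> Z = {}" and "z \<notin> g z"
    using Z(1) Suc.prems(2) \<open>z \<in> S\<close> unfolding N_def by blast+
  moreover have "z \<notin> g w" if "w \<in> Z" for w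
    using Z(1) that unfolding N_def by blast
  ultimately have "\<forall>w\<in>insert z Z. g w \<inter> insert z Z = {}"
    using Z(3) by blast
  moreover have "card (insert z Z) = Suc k"
    using Z(1,2) \<open>z \<notin> Z\<close> Suc.prems(1) finite_subset by fastforce
  ultimately show ?case
    using Z(1) \<open>z \<in> S\<close> by (intro exI[of _ "insert z Z"]) blast
qed

lemma finite_edges:
  "uniform_hypergraph k V E \<Longrightarrow> finite E"
  unfolding uniform_hypergraph_def by (meson Pow_iff finite_Pow_iff finite_subset subsetI)

lemma N1_subset:
  "uniform_hypergraph k V E \<Longrightarrow> N1 E u \<subseteq> V"
  unfolding uniform_hypergraph_def N1_def edgesB_def by auto

lemma codegree_ge_2_if_N1:
  assumes "finite E" and "z \<in> N1 E u" and "z \<noteq> u"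
  shows "2 \<le> codegree E u z"
proof -
  obtain e where e: "e \<in> edgesB E" "{u, z} \<subseteq> e" using assms(2) unfolding N1_def by auto
  then have "e \<in> {f \<in> E. {u, z} \<subseteq> f}" unfolding edgesB_def by auto
  then have "codegree E u z \<noteq> 0" unfolding codegree_def using assms(1) by auto
  moreover have "codegree E u z \<noteq> 1"
    using e assms(3) unfolding edgesB_def edgesA_def by auto
  ultimately show ?thesis by linarith
qed

lemma N1_imp_edge_avoiding:
  assumes H: "uniform_hypergraph 3 V E" and "z \<in> N1 E u"
    and "z \<noteq> u" and "w \<noteq> u" and "w \<noteq> z"
  shows "\<exists>v. {u, z, v} \<in> E \<and> v \<notin> {u, z, w}"
proof -
  have card_edge: "card e = 3" if "e \<in> E" for e
    using H that unfolding uniform_hypergraph_def by auto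
  have "\<exists>e\<in>E. {u, z} \<subseteq> e \<and> w \<notin> e"
  proof (rule ccontr)
    assume all_contain_w: "\<not> ?thesis"
    have "{e \<in> E. {u, z} \<subseteq> e} \<subseteq> {{u, z, w}}"
    proof
      fix e assume e: "e \<in> {e \<in> E. {u, z} \<subseteq> e}"
      with all_contain_w have "{u, z, w} \<subseteq> e" by auto
      moreover have "card {u, z, w} = 3" using assms(3-5) by auto
      moreover have "card e = 3" using e card_edge by auto
      ultimately have "{u, z, w} = e"
        by (intro card_subset_eq) (auto intro: card_ge_0_finite)
      then show "e \<in> {{u, z, w}}" by auto
    qed
    then have "card {e \<in> E. {u, z} \<subseteq> e} \<le> 1"
      using card_mono[of "{{u, z, w}}"] by fastforce
    moreover have "2 \<le> card {e \<in> E. {u, z} \<subseteq> e}"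
      using codegree_ge_2_if_N1[OF finite_edges[OF H] assms(2,3)] unfolding codegree_def .
    ultimately show False by linarith
  qed
  then obtain e where e: "e \<in> E" "{u, z} \<subseteq> e" "w \<notin> e" by blast
  have "card (e - {u, z}) = 1"
    using card_edge[OF e(1)] e(2) assms(3) by (simp add: card_Diff_subset card_ge_0_finite)
  then obtain v where "e - {u, z} = {v}" by (rule card_1_singletonE)
  with e have "e = {u, z, v}" and "v \<notin> {u, z, w}" by blast+
  then show ?thesis using e(1) by blast
qed

lemma contains_traceI:
  assumes "inj_on phi VF" and "phi ` VF \<subseteq> V" and "psi ` EF \<subseteq> E"
    and "\<And>e. e \<in> EF \<Longrightarrow> e \<subseteq> VF"
    and "\<And>e. e \<in> EF \<Longrightarrow> psi e \<inter> phi ` VF = phi ` e"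
  shows "contains_trace V E VF EF"
proof -
  have "inj_on psi EF"
  proof (rule inj_onI)
    fix e1 e2 assume e1: "e1 \<in> EF" and e2: "e2 \<in> EF" and "psi e1 = psi e2"
    then have "phi ` e1 = phi ` e2" using assms(5)[OF e1] assms(5)[OF e2] by simp
    then show "e1 = e2" using inj_on_image_eq_iff[OF assms(1) assms(4)[OF e1] assms(4)[OF e2]] by simp
  qed
  then show ?thesis
    unfolding contains_trace_def
    by (intro exI[of _ phi] exI[of _ psi]) (simp add: assms(1-3,5))
qed

lemma contains_trace_K2t:
  assumes "x \<in> V" and "y \<in> V" and "x \<noteq> y" and "Z \<subseteq> V" and "finite Z" and "card Z = t"
    and "x \<notin> Z" and "y \<notin> Z"
    and "\<forall>z\<in>Z. \<exists>e\<in>E. e \<inter> insert x (insert y Z) = {x, z}"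
    and "\<forall>z\<in>Z. \<exists>e\<in>E. e \<inter> insert x (insert y Z) = {y, z}"
  shows "contains_trace V E (K2t_vertices t) (K2t_edges t)"
proof -
  define W where "W = insert x (insert y Z)"
  obtain ex where ex: "\<forall>z\<in>Z. ex z \<in> E \<and> ex z \<inter> W = {x, z}"
    using bchoice[of Z "\<lambda>z e. e \<in> E \<and> e \<inter> W = {x, z}"] assms(9) unfolding W_def by blast
  obtain ey where ey: "\<forall>z\<in>Z. ey z \<in> E \<and> ey z \<inter> W = {y, z}"
    using bchoice[of Z "\<lambda>z e. e \<in> E \<and> e \<inter> W = {y, z}"] assms(10) unfolding W_def by blast
  obtain h where h: "bij_betw h {0..<t} Z"
    using ex_bij_betw_nat_finite[OF assms(5)] assms(6) by auto
  define phi where "phi j = (if j = 0 then x else if j = 1 then y else h (j - 2))" for j :: nat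
  define psi where "psi e = (if 0 \<in> e then ex else ey) (phi (Max e))" for e :: "nat set"
  have leaves: "phi j \<in> Z" if "j \<in> {2..<t+2}" for j
    using that h unfolding phi_def bij_betw_def by auto
  have vertices: "K2t_vertices t = {0, 1} \<union> (\<lambda>i. i + 2) ` {0..<t}"
    unfolding K2t_vertices_def image_add_atLeastLessThan' by auto
  have "phi ` K2t_vertices t = {x, y} \<union> h ` {0..<t}"
    unfolding vertices image_Un image_image by (simp add: phi_def insert_commute)
  then have image: "phi ` K2t_vertices t = W"
    using h unfolding W_def bij_betw_def by auto
  have "card W = card (K2t_vertices t)"
    unfolding W_def K2t_vertices_def using assms(3,5-8) by simp
  moreover have "finite (K2t_vertices t)" unfolding K2t_vertices_def by simp
  ultimately have "inj_on phi (K2t_vertices t)"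
    by (simp add: inj_on_iff_eq_card image)
  have edge_cases: "\<exists>j\<in>{2..<t+2}. e = {0, j} \<or> e = {1, j}" if "e \<in> K2t_edges t" for e
    using that unfolding K2t_edges_def by auto
  have centres: "phi 0 = x" "phi 1 = y" unfolding phi_def by simp_all
  have trace: "psi e \<inter> W = phi ` e \<and> psi e \<in> E" if e: "e \<in> K2t_edges t" for e
  proof -
    obtain j where j: "j \<in> {2..<t+2}" "e = {0, j} \<or> e = {1, j}" using edge_cases[OF e] by blast
    then have "Max e = j" by auto
    from j(2) show ?thesis
    proof
      assume "e = {0, j}"
      then have "psi e = ex (phi j)" "phi ` e = {x, phi j}"
        using \<open>Max e = j\<close> centres by (simp_all add: psi_def)
      then show ?thesis using ex leaves[OF j(1)] by simp
    next
      assume "e = {1, j}"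
      then have "psi e = ey (phi j)" "phi ` e = {y, phi j}"
        using \<open>Max e = j\<close> centres j(1) by (simp_all add: psi_def)
      then show ?thesis using ey leaves[OF j(1)] by simp
    qed
  qed
  show ?thesis
  proof (rule contains_traceI)
    show "inj_on phi (K2t_vertices t)" by fact
    show "phi ` K2t_vertices t \<subseteq> V" using image assms(1,2,4) unfolding W_def by auto
    show "psi ` K2t_edges t \<subseteq> E" using trace by auto
    show "e \<subseteq> K2t_vertices t" if "e \<in> K2t_edges t" for e
      using edge_cases[OF that] unfolding K2t_vertices_def by auto
    show "psi e \<inter> phi ` K2t_vertices t = phi ` e" if "e \<in> K2t_edges t" for e
      using trace[OF that] image by simp
  qed
qed

lemma card_common_N1_le:
  assumes H: "uniform_hypergraph 3 V E"
    and no_trace: "\<not> contains_trace V E (K2t_vertices t) (K2t_edges t)"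
    and "x \<in> V" and "y \<in> V" and "x \<noteq> y"
  shows "card (N1 E x \<inter> N1 E y) \<le> 5 * t + 1"
proof (rule ccontr)
  assume "\<not> ?thesis"
  define S where "S = N1 E x \<inter> N1 E y - {x, y}"
  have "S \<subseteq> V" unfolding S_def using N1_subset[OF H] by blast
  moreover have "finite V" using H unfolding uniform_hypergraph_def by simp
  ultimately have "finite S" by (rule finite_subset)
  have "card (N1 E x \<inter> N1 E y) - card {x, y} \<le> card S"
    unfolding S_def by (rule diff_card_le_card_Diff) simp
  with \<open>\<not> ?thesis\<close> have "(2 * 2 + 1) * t \<le> card S" using assms(5) by simp
  have "\<forall>z\<in>S. \<exists>v. {x, z, v} \<in> E \<and> v \<notin> {x, z, y}"
  proof
    fix z assume "z \<in> S"
    then show "\<exists>v. {x, z, v} \<in> E \<and> v \<notin> {x, z, y}"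
      using N1_imp_edge_avoiding[OF H, of z x y] assms(5) unfolding S_def by auto
  qed
  then obtain a where a: "\<forall>z\<in>S. {x, z, a z} \<in> E \<and> a z \<notin> {x, z, y}"
    by (rule bchoice[THEN exE])
  have "\<forall>z\<in>S. \<exists>v. {y, z, v} \<in> E \<and> v \<notin> {y, z, x}"
  proof
    fix z assume "z \<in> S"
    then show "\<exists>v. {y, z, v} \<in> E \<and> v \<notin> {y, z, x}"
      using N1_imp_edge_avoiding[OF H, of z y x] assms(5) unfolding S_def by auto
  qed
  then obtain b where b: "\<forall>z\<in>S. {y, z, b z} \<in> E \<and> b z \<notin> {y, z, x}"
    by (rule bchoice[THEN exE])
  define g where "g z = {a z, b z}" for z
  have "\<forall>z\<in>S. card (g z \<inter> S) \<le> 2 \<and> z \<notin> g z"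
  proof
    fix z assume "z \<in> S"
    have "card (g z \<inter> S) \<le> card (g z)" unfolding g_def by (intro card_mono) auto
    also have "\<dots> \<le> 2" unfolding g_def by (simp add: card_insert_if)
    finally show "card (g z \<inter> S) \<le> 2 \<and> z \<notin> g z"
      using a b \<open>z \<in> S\<close> unfolding g_def by auto
  qed
  then obtain Z where Z: "Z \<subseteq> S" "card Z = t" "\<forall>z\<in>Z. g z \<inter> Z = {}"
    using exists_independent_subset[OF \<open>finite S\<close> _ \<open>(2 * 2 + 1) * t \<le> card S\<close>] by blast
  have "x \<notin> Z" "y \<notin> Z" using Z(1) unfolding S_def by auto
  have x_edges: "\<forall>z\<in>Z. \<exists>e\<in>E. e \<inter> insert x (insert y Z) = {x, z}"
  proof
    fix z assume "z \<in> Z"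
    have "a z \<notin> insert x (insert y Z)" using a Z \<open>z \<in> Z\<close> unfolding g_def by auto
    then have "{x, z, a z} \<inter> insert x (insert y Z) = {x, z}" using \<open>z \<in> Z\<close> by auto
    moreover have "{x, z, a z} \<in> E" using a Z(1) \<open>z \<in> Z\<close> by auto
    ultimately show "\<exists>e\<in>E. e \<inter> insert x (insert y Z) = {x, z}" by blast
  qed
  have y_edges: "\<forall>z\<in>Z. \<exists>e\<in>E. e \<inter> insert x (insert y Z) = {y, z}"
  proof
    fix z assume "z \<in> Z"
    have "b z \<notin> insert x (insert y Z)" using b Z \<open>z \<in> Z\<close> unfolding g_def by auto
    then have "{y, z, b z} \<inter> insert x (insert y Z) = {y, z}" using \<open>z \<in> Z\<close> by auto
    moreover have "{y, z, b z} \<in> E" using b Z(1) \<open>z \<in> Z\<close> by auto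
    ultimately show "\<exists>e\<in>E. e \<inter> insert x (insert y Z) = {y, z}" by blast
  qed
  have "Z \<subseteq> V" using Z(1) \<open>S \<subseteq> V\<close> by blast
  have "finite Z" using Z(1) \<open>finite S\<close> by (rule finite_subset)
  have "contains_trace V E (K2t_vertices t) (K2t_edges t)"
    by (rule contains_trace_K2t[OF assms(3-5) \<open>Z \<subseteq> V\<close> \<open>finite Z\<close> Z(2) \<open>x \<notin> Z\<close> \<open>y \<notin> Z\<close>
          x_edges y_edges])
  with no_trace show False ..
qed

theorem mainTheorem5:
  fixes V :: "'a set" and E :: "'a set set" and n t :: nat
  assumes "t \<ge> 3"
    and "uniform_hypergraph 3 V E" and "card V = n"
    and "\<not> contains_trace V E (K2t_vertices t) (K2t_edges t)"
    and "x \<in> V" and "y \<in> V" and "x \<noteq> y"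
  shows "card (N1 E x \<inter> N1 E y) \<le> (t - 1) * (6 * t - 2)"
proof -
  have "5 * t + 1 \<le> 2 * (6 * t - 2)" using assms(1) by simp
  also have "\<dots> \<le> (t - 1) * (6 * t - 2)" using assms(1) by (intro mult_right_mono) auto
  finally show ?thesis
    using card_common_N1_le[OF assms(2,4-7)] by linarith
qed

end
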